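(* For all integers $n\ge 2$ and $0\le k\le n-2$, the number of Dyck $n$-paths containing exactly $k$ long interior inclines equals \[\frac{2}{n+1}\binom{n+1}{k+2}\binom{n-2}{k}.\] Consequently $C_n=\frac{2}{n+1}\sum_{k=0}^{n-2}\binom{n+1}{k+2}\binom{n-2}{k}$, where $C_n$ is the $n$th Catalan number.
   Context: A Dyck $n$-path is a lattice path from $(0,0)$ to $(2n,0)$ consisting of $n$ upsteps $U=(1,1)$ and $n$ downsteps $D=(1,-1)$ that never goes below the $x$-axis. An ascent is a maximal run of consecutive upsteps and a descent is a maximal run of consecutive downsteps; an incline is an ascent or a descent. An incline is long if it consists of at least two steps. In a nonempty Dyck path the first ascent (initial ascent) and the last descent (terminal descent) are not interior; all other inclines are interior. *)

theory Defs
  imports Complex_Main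
begin

text \<open>A path is a list of steps: True = upstep U, False = downstep D.\<close>

definition height :: "bool list \<Rightarrow> int" where
  "height w = int (length (filter id w)) - int (length (filter Not w))"

definition dyck :: "nat \<Rightarrow> bool list \<Rightarrow> bool" where
  "dyck n w \<longleftrightarrow> length (filter id w) = n \<and> length (filter Not w) = n \<and>
     (\<forall>i \<le> length w. height (take i w) \<ge> 0)"

text \<open>Maximal runs of equal consecutive steps (inclines), as (step, length).\<close>
fun runs :: "bool list \<Rightarrow> (bool \<times> nat) list" where
  "runs [] = []"
| "runs (x # xs) = (case runs xs of
      [] \<Rightarrow> [(x, 1)]
    | (y, m) # r \<Rightarrow> (if x = y then (y, Suc m) # r else (x, 1) # (y, m) # r))"

definition interior_inclines :: "bool list \<Rightarrow> (bool \<times> nat) list" where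
  "interior_inclines w = butlast (tl (runs w))"

definition long_interior_count :: "bool list \<Rightarrow> nat" where
  "long_interior_count w = length (filter (\<lambda>(b, m). m \<ge> 2) (interior_inclines w))"

definition catalan :: "nat \<Rightarrow> nat" where
  "catalan n = ((2 * n) choose n) div (n + 1)"

end

theory Submission
  imports Defs
begin

(* A long interior incline is either a long ascent preceded by a downstep, which begins with
   D U U, or a long descent followed by an upstep, which ends with D D U. So the long interior
   inclines of a Dyck path are counted by the positions carrying a D with a U two steps later.
   This statistic is counted over the suffixes of Dyck paths, classified by their starting
   height h, their number m of upsteps and the two steps a, b preceding them. Removing the first
   step gives a recursion, whose solution is the 2 x 2 determinant of binomial coefficients
     C(p, k+u-1) C(q, k) - C(p, k+u) C(q, k-1),   p = m+u-1,  q = m+h-u,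
   u being the number of upsteps among a and b: every step of the recursion is Pascal's rule
   in one row of the determinant. For Dyck n-paths the determinant is
   C(n, k+1) C(n-2, k) - C(n, k+2) C(n-2, k-1) = 2/(n+1) C(n+1, k+2) C(n-2, k), and summing
   over k, Vandermonde's identity gives the Catalan number. *)

lemma height_Nil [simp]: "height [] = 0"
  by (simp add: height_def)

lemma height_Cons [simp]: "height (x # w) = (if x then 1 else -1) + height w"
  by (simp add: height_def)

fun dyck_suffix :: "nat \<Rightarrow> bool list \<Rightarrow> bool" where
  "dyck_suffix h [] \<longleftrightarrow> h = 0"
| "dyck_suffix h (x # w) \<longleftrightarrow> (if x then dyck_suffix (Suc h) w else 0 < h \<and> dyck_suffix (h - 1) w)"

lemma all_le_Suc_conv: "(\<forall>i \<le> Suc n. P i) \<longleftrightarrow> P 0 \<and> (\<forall>i \<le> n. P (Suc i))"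
  by (metis Suc_le_mono le0 not0_implies_Suc)

lemma dyck_suffix_iff_height:
  "dyck_suffix h w \<longleftrightarrow> int h + height w = 0 \<and> (\<forall>i \<le> length w. 0 \<le> int h + height (take i w))"
proof (induction w arbitrary: h)
  case Nil
  then show ?case
    by simp
next
  case (Cons x w)
  show ?case
  proof (cases x)
    case True
    then show ?thesis
      using Cons.IH[of "Suc h"] by (simp add: all_le_Suc_conv algebra_simps)
  next
    case False
    then show ?thesis
      using Cons.IH[of "h - 1"] by (cases h) (auto simp: all_le_Suc_conv algebra_simps)
  qed
qed

lemma dyck_iff_dyck_suffix: "dyck n w \<longleftrightarrow> dyck_suffix 0 w \<and> length (filter id w) = n"
  unfolding dyck_def dyck_suffix_iff_height height_def by auto

lemma length_dyck_suffix: "dyck_suffix h w \<Longrightarrow> length w = 2 * length (filter id w) + h"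
  by (induction w arbitrary: h) (auto split: if_splits)

lemma dyck_suffix_not_last: "dyck_suffix h w \<Longrightarrow> w \<noteq> [] \<Longrightarrow> \<not> last w"
  by (induction h w rule: dyck_suffix.induct) (auto split: if_splits)

lemma dyck_suffix_no_up:
  "length (filter id w) = 0 \<Longrightarrow> dyck_suffix h w \<longleftrightarrow> w = replicate h False"
proof (induction w arbitrary: h)
  case (Cons x w)
  then show ?case
    by (cases h) auto
qed simp

lemma runs_Cons_first_run:
  "\<exists>m r. runs (x # w) = (x, Suc m) # r \<and> (0 < m \<longleftrightarrow> w \<noteq> [] \<and> hd w = x)"
proof (induction w arbitrary: x)
  case Nil
  then show ?case
    by simp
next
  case (Cons y w)
  then obtain m r where "runs (y # w) = (y, Suc m) # r"
    by blast
  then show ?case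
    by simp
qed

lemma concat_runs: "concat (map (\<lambda>(b, m). replicate m b) (runs w)) = w"
  by (induction w) (auto split: list.split)

lemma runs_eq_singletonD: "runs w = [(b, m)] \<Longrightarrow> w = replicate m b"
  using concat_runs[of w] by simp

lemma long_last_run_iff:
  "w \<noteq> [] \<Longrightarrow> 2 \<le> snd (last (runs w)) \<longleftrightarrow> (\<exists>z. drop (length w - 2) w = [z, z])"
proof (induction w)
  case Nil
  then show ?case
    by simp
next
  case (Cons x w)
  show ?case
  proof (cases w)
    case Nil
    then show ?thesis
      by simp
  next
    case (Cons y v)
    obtain m r where runs_w: "runs w = (y, Suc m) # r"
      using runs_Cons_first_run Cons by blast
    show ?thesis
    proof (cases "r = []")
      case True
      then have "w = replicate (Suc m) y"
        using runs_eq_singletonD runs_w by blast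
      then have "drop (length (x # w) - 2) (x # w) = (if m = 0 then [x, y] else [y, y])"
        by (cases m) (simp_all add: numeral_2_eq_2 del: replicate_Suc, simp_all)
      moreover have "runs (x # w) = (if x = y then [(y, Suc (Suc m))] else [(x, 1), (y, Suc m)])"
        using runs_w True by simp
      ultimately show ?thesis
        by auto
    next
      case False
      have "length w \<noteq> 1"
        using runs_w False by (auto simp: length_Suc_conv)
      then have "drop (length (x # w) - 2) (x # w) = drop (length w - 2) w"
        using \<open>w = y # v\<close> by (cases v) simp_all
      moreover have "last (runs (x # w)) = last (runs w)"
        using runs_w False by simp
      ultimately show ?thesis
        using Cons.IH \<open>w = y # v\<close> by simp
    qed
  qed
qed

definition count_long :: "(bool \<times> nat) list \<Rightarrow> nat" where
  "count_long R = length (filter (\<lambda>(b, m). 2 \<le> m) R)"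

lemma count_long_simps [simp]:
  "count_long [] = 0"
  "count_long ((b, m) # R) = of_bool (2 \<le> m) + count_long R"
  "count_long (R @ [(b, m)]) = count_long R + of_bool (2 \<le> m)"
  by (simp_all add: count_long_def)

fun count_triples :: "('a \<Rightarrow> 'a \<Rightarrow> 'a \<Rightarrow> bool) \<Rightarrow> 'a list \<Rightarrow> nat" where
  "count_triples P (x # y # z # w) = of_bool (P x y z) + count_triples P (y # z # w)"
| "count_triples P _ = 0"

abbreviation dxu_count :: "bool list \<Rightarrow> nat" where
  "dxu_count \<equiv> count_triples (\<lambda>x _ z. \<not> x \<and> z)"

lemma count_long_tl_runs:
  "count_long (tl (runs w)) = count_triples (\<lambda>x y z. x \<noteq> y \<and> y = z) w"
proof (induction w)
  case Nil
  then show ?case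
    by simp
next
  case (Cons x w)
  show ?case
  proof (cases w)
    case Nil
    then show ?thesis
      by simp
  next
    case (Cons y v)
    obtain m r where "runs (y # v) = (y, Suc m) # r" and "0 < m \<longleftrightarrow> v \<noteq> [] \<and> hd v = y"
      using runs_Cons_first_run by blast
    with Cons.IH Cons show ?thesis
      by (cases v) auto
  qed
qed

(* Besides the D U U triples, which occur on both sides, each side counts the maximal runs of
   at least two downsteps: the left side by where they begin (U D D or a leading D D), the right
   side by where they end (D D U or a trailing D D). *)
lemma long_run_starts_eq_dxu_count:
  "count_triples (\<lambda>x y z. x \<noteq> y \<and> y = z) w + of_bool (take 2 w = [False, False])
     = dxu_count w + of_bool (drop (length w - 2) w = [False, False])"
proof (induction w rule: induct_list012)
  case (3 x y w)
  then show ?case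
    by (cases w) auto
qed simp_all

lemma long_interior_count_eq_dxu_count:
  assumes "w \<noteq> []" and "hd w" and "\<not> last w"
  shows "long_interior_count w = dxu_count w"
proof -
  define R where "R = runs w"
  have "tl R \<noteq> []"
  proof
    assume "tl R = []"
    moreover have "R \<noteq> []"
      using runs_Cons_first_run[of "hd w" "tl w"] assms(1) by (auto simp: R_def)
    ultimately have "runs w = [(fst (hd R), snd (hd R))]"
      unfolding R_def by (cases "runs w") auto
    then have "w = replicate (snd (hd R)) (fst (hd R))"
      by (rule runs_eq_singletonD)
    then show False
      using assms by simp
  qed
  then have "tl R = butlast (tl R) @ [(fst (last R), snd (last R))]"
    by (simp add: last_tl[symmetric])
  then have "count_long (tl R) = count_long (butlast (tl R)) + of_bool (2 \<le> snd (last R))"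
    by (metis count_long_simps(3))
  also have "count_long (butlast (tl R)) = long_interior_count w"
    by (simp add: long_interior_count_def interior_inclines_def count_long_def R_def)
  also have "2 \<le> snd (last R) \<longleftrightarrow> drop (length w - 2) w = [False, False]"
  proof -
    have "last (drop (length w - 2) w) = last w"
      using assms(1) by simp
    then show ?thesis
      using long_last_run_iff[OF assms(1)] assms(3) unfolding R_def by auto
  qed
  finally have "count_long (tl R)
      = long_interior_count w + of_bool (drop (length w - 2) w = [False, False])" .
  moreover have "take 2 w \<noteq> [False, False]"
    using assms(1,2) by (cases w) auto
  ultimately show ?thesis
    using count_long_tl_runs[of w] long_run_starts_eq_dxu_count[of w] by (simp add: R_def)
qed

lemma dxu_count_Cons_True: "dxu_count (True # w) = dxu_count w"
  by (induction w rule: induct_list012) simp_all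

lemma dxu_count_replicate_False: "dxu_count (a # b # replicate h False) = 0"
  by (induction h arbitrary: a b) simp_all

lemma Suc_times_binomial_Suc: "Suc k * (n choose Suc k) = (n - k) * (n choose k)"
  by (metis binomial_absorb_comp binomial_absorption)

definition binom :: "nat \<Rightarrow> int \<Rightarrow> int" where
  "binom n k = (if k < 0 then 0 else int (n choose nat k))"

lemma binom_of_nat [simp]: "binom n (int k) = int (n choose k)"
  by (simp add: binom_def)

lemma binom_neg [simp]: "k < 0 \<Longrightarrow> binom n k = 0"
  by (simp add: binom_def)

lemma binom_0_right [simp]: "binom n 0 = 1"
  by (simp add: binom_def)

lemma binom_0_left: "binom 0 k = of_bool (k = 0)"
  by (simp add: binom_def)

lemma binom_1_left: "binom (Suc 0) k = of_bool (k = 0 \<or> k = 1)"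
  by (auto simp: binom_def binomial_eq_0)

lemma binom_Suc: "binom (Suc n) k = binom n (k - 1) + binom n k"
proof (cases "k \<le> 0")
  case True
  then show ?thesis
    by (auto simp: binom_def)
next
  case False
  then obtain j where "k = int (Suc j)"
    by (metis gr0_implies_Suc not_le pos_int_cases)
  then show ?thesis
    using binom_of_nat[of "Suc n" "Suc j"] binom_of_nat[of n "Suc j"] by simp
qed

lemma binom_absorption: "(k + 1) * binom (Suc p) (k + 1) = int (Suc p) * binom p k"
proof (cases "k < 0")
  case True
  then show ?thesis
    by (cases "k = -1") auto
next
  case False
  then obtain j where k: "k = int j"
    by (metis nonneg_int_cases not_less)
  have "int (Suc j) * int (Suc p choose Suc j) = int (Suc p) * int (p choose j)"
    by (metis Suc_times_binomial of_nat_mult)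
  then show ?thesis
    using binom_of_nat[of "Suc p" "Suc j"] k by (simp add: ac_simps)
qed

lemma binom_absorb_comp: "(k + 1) * binom p (k + 1) = (int p - k) * binom p k"
proof (cases "k < 0")
  case True
  then show ?thesis
    by (cases "k = -1") auto
next
  case False
  then obtain j where k: "k = int j"
    by (metis nonneg_int_cases not_less)
  have "int (Suc j) * int (p choose Suc j) = int (p - j) * int (p choose j)"
    by (metis Suc_times_binomial_Suc of_nat_mult)
  then show ?thesis
    using binom_of_nat[of p "Suc j"] k
    by (cases "j \<le> p") (simp_all add: of_nat_diff binomial_eq_0 ac_simps)
qed

definition binom_det :: "nat \<Rightarrow> nat \<Rightarrow> int \<Rightarrow> int \<Rightarrow> int" where
  "binom_det p q i j = binom p i * binom q j - binom p (i + 1) * binom q (j - 1)"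

lemma binom_det_Suc_left: "binom_det (Suc p) q i j = binom_det p q i j + binom_det p q (i - 1) j"
  by (simp add: binom_det_def binom_Suc algebra_simps)

lemma binom_det_Suc_right: "binom_det p (Suc q) i j = binom_det p q i j + binom_det p q i (j - 1)"
  by (simp add: binom_det_def binom_Suc algebra_simps)

lemma binom_det_diag: "binom_det p p i (i + 1) = 0"
  by (simp add: binom_det_def)

lemma binom_det_closed_form:
  assumes "2 \<le> n" and "k \<le> n - 2"
  shows "real_of_int (binom_det n (n - 2) (int k + 1) (int k))
           = 2 / real (n + 1) * real ((n + 1) choose (k + 2)) * real ((n - 2) choose k)"
proof -
  define A where "A = real_of_int (binom n (int k + 1))"
  define B where "B = real_of_int (binom (n - 2) (int k))"
  define C where "C = real_of_int (binom n (int k + 2))"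
  define E where "E = real_of_int (binom (n - 2) (int k - 1))"
  define N where "N = real_of_int (binom (Suc n) (int k + 2))"
  define d where "d = real n - real k - 1"
  have "0 < d"
    using assms unfolding d_def by linarith
  have N: "N = real (n + 1) * A / (real k + 2)"
    using arg_cong[where f = real_of_int, OF binom_absorption[of "int k + 1" n]]
    unfolding A_def N_def of_int_mult of_int_add of_int_of_nat_eq
    by (simp add: field_simps)
  have C: "C = d * A / (real k + 2)"
    using arg_cong[where f = real_of_int, OF binom_absorb_comp[of "int k + 1" n]]
    unfolding A_def C_def d_def of_int_mult of_int_add of_int_diff of_int_of_nat_eq
    by (simp add: field_simps)
  have E: "E = real k * B / d"
    using arg_cong[where f = real_of_int, OF binom_absorb_comp[of "int k - 1" "n - 2"]]
      \<open>0 < d\<close> assms(1)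
    unfolding B_def E_def d_def of_int_mult of_int_add of_int_diff of_int_of_nat_eq
    by (simp add: field_simps of_nat_diff)
  have "real_of_int (binom_det n (n - 2) (int k + 1) (int k)) = A * B - C * E"
    by (simp add: binom_det_def A_def B_def C_def E_def ac_simps)
  also have "\<dots> = 2 * A * B / (real k + 2)"
    unfolding C E using \<open>0 < d\<close> by (simp add: field_simps)
  also have "\<dots> = 2 / real (n + 1) * N * B"
    unfolding N by (simp add: field_simps del: of_nat_add of_nat_Suc)
  finally show ?thesis
    using binom_of_nat[of "Suc n" "k + 2"] by (simp add: N_def B_def ac_simps)
qed

definition dyck_suffixes :: "nat \<Rightarrow> nat \<Rightarrow> bool \<Rightarrow> bool \<Rightarrow> int \<Rightarrow> bool list set" where
  "dyck_suffixes h m a b k =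
     {w. dyck_suffix h w \<and> length (filter id w) = m \<and> int (dxu_count (a # b # w)) = k}"

lemma finite_dyck_suffixes: "finite (dyck_suffixes h m a b k)"
proof (rule finite_subset)
  show "dyck_suffixes h m a b k \<subseteq> {w :: bool list. set w \<subseteq> UNIV \<and> length w = 2 * m + h}"
    by (auto simp: dyck_suffixes_def length_dyck_suffix)
  show "finite {w :: bool list. set w \<subseteq> UNIV \<and> length w = 2 * m + h}"
    by (rule finite_lists_length_eq) simp
qed

lemma card_dyck_suffixes_0: "card (dyck_suffixes h 0 a b k) = of_bool (k = 0)"
proof -
  have "dyck_suffixes h 0 a b k = (if k = 0 then {replicate h False} else {})"
    by (auto simp: dyck_suffixes_def dyck_suffix_no_up dxu_count_replicate_False)
  then show ?thesis
    by simp
qed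

lemma dyck_suffixes_Suc:
  "dyck_suffixes h (Suc m) a b k =
     Cons True ` dyck_suffixes (Suc h) m b True (k - of_bool (\<not> a)) \<union>
     (if h = 0 then {} else Cons False ` dyck_suffixes (h - 1) (Suc m) b False k)"
  (is "?S = ?A \<union> ?B")
proof (intro set_eqI)
  show "w \<in> ?S \<longleftrightarrow> w \<in> ?A \<union> ?B" for w
    by (cases w) (auto simp: dyck_suffixes_def)
qed

lemma card_dyck_suffixes_Suc:
  "card (dyck_suffixes h (Suc m) a b k) =
     card (dyck_suffixes (Suc h) m b True (k - of_bool (\<not> a))) +
     (if h = 0 then 0 else card (dyck_suffixes (h - 1) (Suc m) b False k))"
proof -
  have card_Cons: "card (Cons x ` A) = card A" for x and A :: "bool list set"
    by (rule card_image) (simp add: inj_on_def)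
  show ?thesis
    by (subst dyck_suffixes_Suc, subst card_Un_disjoint) (auto simp: finite_dyck_suffixes card_Cons)
qed

definition dxu_closed :: "nat \<Rightarrow> nat \<Rightarrow> bool \<Rightarrow> bool \<Rightarrow> int \<Rightarrow> int" where
  "dxu_closed h m a b k =
     (let u = of_bool a + of_bool b in binom_det (m + u - 1) (m + h - u) (k + int u - 1) k)"

lemma dxu_closed_0: "dxu_closed (Suc h) 0 b True k = of_bool (k = 0)"
  by (cases b) (auto simp: dxu_closed_def binom_det_def binom_0_left binom_1_left)

lemma dxu_closed_Suc:
  assumes "b \<longrightarrow> 0 < h"
  shows "dxu_closed h (Suc m) a b k =
     dxu_closed (Suc h) m b True (k - of_bool (\<not> a)) +
     (if h = 0 then 0 else dxu_closed (h - 1) (Suc m) b False k)"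
proof (cases a)
  case True
  then show ?thesis
    using binom_det_Suc_left[of "m + of_bool b" "m + h - of_bool b" "k + of_bool b" k]
      binom_det_diag[of m "k - 1"] assms
    by (cases b; cases h) (simp_all add: dxu_closed_def ac_simps)
next
  case False
  then show ?thesis
    using binom_det_Suc_right[of "m + of_bool b" "m + h - of_bool b" "k + of_bool b - 1" k]
      binom_det_diag[of m "k - 1"] assms
    by (cases b; cases h) (simp_all add: dxu_closed_def ac_simps)
qed

lemma card_dyck_suffixes:
  assumes "b \<longrightarrow> 0 < h"
  shows "int (card (dyck_suffixes h (Suc m) a b k)) = dxu_closed h (Suc m) a b k"
  using assms
proof (induction "2 * m + h" arbitrary: h m a b k rule: less_induct)
  case less
  have up: "int (card (dyck_suffixes (Suc h) m b True k')) = dxu_closed (Suc h) m b True k'" for k'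
  proof (cases m)
    case 0
    then show ?thesis
      by (simp add: card_dyck_suffixes_0 dxu_closed_0)
  next
    case (Suc m')
    then show ?thesis
      using less.hyps[of m' "Suc h"] by simp
  qed
  have down: "int (card (dyck_suffixes (h - 1) (Suc m) b False k))
      = dxu_closed (h - 1) (Suc m) b False k" if "h \<noteq> 0"
    using less.hyps[of m "h - 1"] that by simp
  show ?case
    using up down less.prems by (simp add: card_dyck_suffixes_Suc dxu_closed_Suc)
qed

lemma dyck_long_interior_eq_image:
  assumes "0 < n"
  shows "{w. dyck n w \<and> long_interior_count w = k}
           = Cons True ` dyck_suffixes 1 (n - 1) True True (int k)"
  (is "?L = ?R")
proof (intro set_eqI)
  have long_interior: "long_interior_count w = dxu_count w"
    if "dyck_suffix 0 w" and "w \<noteq> []" for w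
    using that dyck_suffix_not_last[OF that] long_interior_count_eq_dxu_count[OF that(2)]
    by (cases w) (auto split: if_splits)
  show "w \<in> ?L \<longleftrightarrow> w \<in> ?R" for w
    using assms
    by (cases w) (auto simp: dyck_iff_dyck_suffix dyck_suffixes_def long_interior dxu_count_Cons_True)
qed

lemma card_dyck_long_interior:
  assumes "2 \<le> n"
  shows "real (card {w. dyck n w \<and> long_interior_count w = k})
           = real_of_int (binom_det n (n - 2) (int k + 1) (int k))"
proof -
  obtain m where n: "n = Suc (Suc m)"
    using assms by (metis add_2_eq_Suc le_Suc_ex)
  have "card {w. dyck n w \<and> long_interior_count w = k} = card (dyck_suffixes 1 (Suc m) True True (int k))"
    using dyck_long_interior_eq_image[of n k] n by (simp add: card_image)
  moreover have "int (card (dyck_suffixes 1 (Suc m) True True (int k)))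
      = binom_det n (n - 2) (int k + 1) (int k)"
    using card_dyck_suffixes[of True 1 m True "int k"] n by (simp add: dxu_closed_def ac_simps)
  ultimately show ?thesis
    by (metis of_int_of_nat_eq)
qed

lemma Suc_dvd_central_binomial: "Suc n dvd (2 * n) choose n"
proof -
  have "Suc n * ((2 * n) choose Suc n) = n * ((2 * n) choose n)"
    using Suc_times_binomial_Suc[of n "2 * n"] by simp
  then have "Suc n dvd Suc n * ((2 * n) choose n) - n * ((2 * n) choose n)"
    by (metis dvd_diff_nat dvd_triv_left)
  then show ?thesis
    by (simp flip: diff_mult_distrib)
qed

lemma real_catalan: "real (catalan n) = real ((2 * n) choose n) / real (n + 1)"
  by (simp add: catalan_def real_of_nat_div Suc_dvd_central_binomial)

lemma central_binomial_Suc: "(2 * Suc p) choose Suc p = 2 * ((2 * p + 1) choose p)"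
proof -
  have "(2 * p + 1) choose Suc p = (2 * p + 1) choose p"
    using binomial_symmetric[of p "2 * p + 1"] by simp
  then show ?thesis
    by simp
qed

lemma vandermonde_shifted:
  "(\<Sum>k = 0..m. ((m + 3) choose (k + 2)) * (m choose k)) = (2 * m + 3) choose (m + 1)"
proof -
  have "(\<Sum>k \<le> m + 1. (m choose k) * ((m + 3) choose (m + 1 - k))) = (2 * m + 3) choose (m + 1)"
    using vandermonde[of m "m + 3" "m + 1"] by (simp add: ac_simps)
  moreover have "(m + 3) choose (m + 1 - k) = (m + 3) choose (k + 2)" if "k \<le> m" for k
    using binomial_symmetric[of "k + 2" "m + 3"] that by (simp add: Suc_diff_le)
  ultimately show ?thesis
    by (simp add: atLeast0AtMost mult.commute binomial_eq_0)
qed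

lemma catalan_eq_sum:
  assumes "2 \<le> n"
  shows "real (catalan n)
           = 2 / real (n + 1) * (\<Sum>k = 0..n - 2. real ((n + 1) choose (k + 2)) * real ((n - 2) choose k))"
proof -
  obtain m where n: "n = m + 2"
    using assms by (metis le_add_diff_inverse2)
  have "(2 * n) choose n = 2 * ((2 * m + 3) choose (m + 1))"
  proof -
    have "2 * n = 2 * Suc (Suc m)" "n = Suc (Suc m)" "2 * m + 3 = 2 * Suc m + 1" "m + 1 = Suc m"
      using n by simp_all
    then show ?thesis
      using central_binomial_Suc[of "Suc m"] by (simp only:)
  qed
  moreover have "n - 2 = m" and "n + 1 = m + 3"
    using n by simp_all
  moreover have "(\<Sum>k = 0..n - 2. real ((n + 1) choose (k + 2)) * real ((n - 2) choose k))
      = real ((2 * m + 3) choose (m + 1))"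
    unfolding \<open>n - 2 = m\<close> \<open>n + 1 = m + 3\<close> of_nat_mult[symmetric] of_nat_sum[symmetric]
    by (rule arg_cong[OF vandermonde_shifted])
  ultimately show ?thesis
    by (simp add: real_catalan)
qed

theorem mainTheorem1:
  fixes n :: nat
  assumes "n \<ge> 2"
  shows "(\<forall>k \<le> n - 2. real (card {w. dyck n w \<and> long_interior_count w = k})
            = 2 / real (n + 1) * real ((n + 1) choose (k + 2)) * real ((n - 2) choose k))
     \<and> real (catalan n)
            = 2 / real (n + 1) * (\<Sum>k = 0..n - 2. real ((n + 1) choose (k + 2)) * real ((n - 2) choose k))"
  using card_dyck_long_interior[OF assms] binom_det_closed_form[OF assms] catalan_eq_sum[OF assms]
  by simp

end
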